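(* Let $\mu>0$ and let $\gamma$ be a curve in $\mathbb M^2(\rho)$ with constant curvature $\kappa$ satisfying $\frac{d^2}{ds^2}(e^{\mu\kappa})+(\kappa^2-\kappa/\mu+\rho)e^{\mu\kappa}=0$. Then: (1) if $\rho=0$ (Euclidean plane $\mathbb R^2$), $\gamma$ is either a geodesic (straight line) or a circle of radius $\mu$; (2) if $\rho>0$ (sphere $\mathbb S^2(\rho)$), then $0<2\sqrt\rho\,\mu\le 1$; if $2\sqrt\rho\,\mu<1$ there are two solutions, corresponding to two parallels (circles), and if $2\sqrt\rho\,\mu=1$ the solution is a circle of curvature $\sqrt\rho$; (3) if $\rho<0$ (hyperbolic plane $\mathbb H^2(\rho)$), $\gamma$ is either a circle or a hypercycle.
   Context: $\mathbb M^2(\rho)$ is the simply connected complete surface of constant curvature $\rho$; $\kappa$ denotes signed geodesic curvature and $s$ arc-length. Standing assumption in the paper: the energy index $\mu$ is positive. *)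

theory Defs
  imports "HOL-Analysis.Analysis"
begin

text \<open>Curves of constant signed geodesic curvature \<kappa> in the space form M^2(\<rho>)
  are classified by \<kappa>.  A geodesic circle of radius r in M^2(\<rho>) has geodesic
  curvature (up to the sign given by orientation) equal to ct \<rho> r below; a hypercycle
  at distance d > 0 from a geodesic in H^2(\<rho>) has curvature sqrt(-\<rho>) tanh(sqrt(-\<rho>) d).\<close>

definition ct :: "real \<Rightarrow> real \<Rightarrow> real" where
  "ct \<rho> r = (if \<rho> = 0 then 1 / r
              else if \<rho> > 0 then sqrt \<rho> * cos (sqrt \<rho> * r) / sin (sqrt \<rho> * r)
              else sqrt (- \<rho>) * cosh (sqrt (- \<rho>) * r) / sinh (sqrt (- \<rho>) * r))"

definition is_geodesic :: "real \<Rightarrow> bool" where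
  "is_geodesic \<kappa> \<longleftrightarrow> \<kappa> = 0"

definition is_circle_radius :: "real \<Rightarrow> real \<Rightarrow> real \<Rightarrow> bool" where
  "is_circle_radius \<rho> \<kappa> r \<longleftrightarrow>
     0 < r \<and> (\<rho> > 0 \<longrightarrow> r < pi / sqrt \<rho>) \<and> \<bar>\<kappa>\<bar> = \<bar>ct \<rho> r\<bar>"

definition is_circle :: "real \<Rightarrow> real \<Rightarrow> bool" where
  "is_circle \<rho> \<kappa> \<longleftrightarrow> (\<exists>r. is_circle_radius \<rho> \<kappa> r)"

definition is_hypercycle :: "real \<Rightarrow> real \<Rightarrow> bool" where
  "is_hypercycle \<rho> \<kappa> \<longleftrightarrow>
     \<rho> < 0 \<and> (\<exists>d>0. \<bar>\<kappa>\<bar> = sqrt (- \<rho>) * tanh (sqrt (- \<rho>) * d))"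

definition EL_const :: "real \<Rightarrow> real \<Rightarrow> real \<Rightarrow> bool" where
  "EL_const \<mu> \<rho> \<kappa> \<longleftrightarrow>
     (\<forall>s. deriv (deriv (\<lambda>t. exp (\<mu> * \<kappa>))) s
            + (\<kappa>\<^sup>2 - \<kappa> / \<mu> + \<rho>) * exp (\<mu> * \<kappa>) = 0)"

end

theory Submission
  imports Defs
begin

text \<open>Since \<kappa> is constant, the second-derivative term vanishes and the Euler--Lagrange
  equation is the quadratic \<mu>\<kappa>^2 - \<kappa> + \<rho>\<mu> = 0, i.e. (2\<mu>\<kappa> - 1)^2 = 1 - 4\<rho>\<mu>^2.
  For \<rho> = 0 its roots are 0 and 1/\<mu>.  For \<rho> > 0 it has real roots only if 2\<surd>\<rho>\<mu> \<le> 1,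
  two of them when the inequality is strict and the double root \<surd>\<rho> otherwise; on the
  sphere every curvature is that of a parallel.  For \<rho> < 0 no root is 0 or \<plusminus>\<surd>-\<rho>;
  curvatures with |\<kappa>| > \<surd>-\<rho> are those of geodesic circles, and those with
  0 < |\<kappa>| < \<surd>-\<rho> those of hypercycles.\<close>

lemma EL_const_iff: "EL_const \<mu> \<rho> k \<longleftrightarrow> k\<^sup>2 - k / \<mu> + \<rho> = 0"
  unfolding EL_const_def by simp

lemma EL_const_iff_square:
  fixes \<mu> \<rho> k :: real
  assumes "\<mu> > 0"
  shows "EL_const \<mu> \<rho> k \<longleftrightarrow> (2 * \<mu> * k - 1)\<^sup>2 = 1 - 4 * \<rho> * \<mu>\<^sup>2"
proof -
  have "EL_const \<mu> \<rho> k \<longleftrightarrow> 4 * \<mu>\<^sup>2 * (k\<^sup>2 - k / \<mu> + \<rho>) = 0"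
    using assms by (simp add: EL_const_iff)
  also have "4 * \<mu>\<^sup>2 * (k\<^sup>2 - k / \<mu> + \<rho>) = (2 * \<mu> * k - 1)\<^sup>2 - (1 - 4 * \<rho> * \<mu>\<^sup>2)"
    using assms by (simp add: power2_eq_square field_simps)
  finally show ?thesis
    by simp
qed

lemma EL_const_Euclidean:
  fixes \<mu> k :: real
  assumes "\<mu> > 0"
  shows "EL_const \<mu> 0 k \<longleftrightarrow> k = 0 \<or> k = 1 / \<mu>"
proof -
  have "k\<^sup>2 - k / \<mu> = k * (k - 1 / \<mu>)"
    by (simp add: power2_eq_square algebra_simps)
  then show ?thesis
    by (simp add: EL_const_iff)
qed

lemma is_circle_radius_Euclidean: "r > 0 \<Longrightarrow> is_circle_radius 0 (1 / r) r"
  by (simp add: is_circle_radius_def ct_def)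

lemma EL_const_imp_discriminant_nonneg:
  fixes \<mu> \<rho> k :: real
  assumes "\<mu> > 0" and "EL_const \<mu> \<rho> k"
  shows "4 * \<rho> * \<mu>\<^sup>2 \<le> 1"
  using assms EL_const_iff_square[of \<mu> \<rho> k] zero_le_power2[of "2 * \<mu> * k - 1"] by linarith

lemma EL_const_roots:
  fixes \<mu> \<rho> :: real
  defines "d \<equiv> sqrt (1 - 4 * \<rho> * \<mu>\<^sup>2)"
  assumes "\<mu> > 0" and "4 * \<rho> * \<mu>\<^sup>2 \<le> 1"
  shows "{k. EL_const \<mu> \<rho> k} = {(1 + d) / (2 * \<mu>), (1 - d) / (2 * \<mu>)}"
proof -
  have "d\<^sup>2 = 1 - 4 * \<rho> * \<mu>\<^sup>2"
    using assms(3) by (simp add: d_def)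
  then have "EL_const \<mu> \<rho> k \<longleftrightarrow> (2 * \<mu> * k - 1)\<^sup>2 = d\<^sup>2" for k
    using EL_const_iff_square[OF assms(2)] by simp
  then have "EL_const \<mu> \<rho> k \<longleftrightarrow> 2 * \<mu> * k - 1 = d \<or> 2 * \<mu> * k - 1 = - d" for k
    by (simp only: power2_eq_iff)
  moreover have "2 * \<mu> * k - 1 = e \<longleftrightarrow> k = (1 + e) / (2 * \<mu>)" for k e
    using assms(2) by (auto simp: field_simps)
  ultimately show ?thesis
    by (auto simp only: mem_Collect_eq insert_iff empty_iff diff_conv_add_uminus)
qed

lemma card_EL_const:
  fixes \<mu> \<rho> :: real
  assumes "\<mu> > 0" and "4 * \<rho> * \<mu>\<^sup>2 < 1"
  shows "card {k. EL_const \<mu> \<rho> k} = 2"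
proof -
  have "sqrt (1 - 4 * \<rho> * \<mu>\<^sup>2) > 0"
    using assms(2) by simp
  then show ?thesis
    using assms EL_const_roots[of \<mu> \<rho>] by (simp add: field_simps)
qed

lemma EL_const_double_root:
  fixes \<mu> \<rho> k :: real
  assumes "\<mu> > 0" and "2 * sqrt \<rho> * \<mu> = 1" and "EL_const \<mu> \<rho> k"
  shows "k = sqrt \<rho>"
proof -
  have "sqrt \<rho> > 0"
    using assms(1,2) by (smt (verit) mult_nonpos_nonneg)
  moreover have "(2 * sqrt \<rho> * \<mu>)\<^sup>2 = 1"
    using assms(2) by simp
  ultimately have "4 * \<rho> * \<mu>\<^sup>2 = 1"
    by (simp add: power_mult_distrib)
  then have "2 * \<mu> * k = 2 * sqrt \<rho> * \<mu>"
    using EL_const_iff_square[OF assms(1)] assms(2,3) by simp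
  then show ?thesis
    using assms(1) by simp
qed

lemma is_circle_sphere:
  fixes \<rho> k :: real
  assumes "\<rho> > 0"
  shows "is_circle \<rho> k"
proof -
  define a where "a = arctan (\<bar>k\<bar> / sqrt \<rho>)"
  define r where "r = (pi / 2 - a) / sqrt \<rho>"
  have a: "- (pi / 2) < a" "a < pi / 2"
    using arctan_bounded a_def by auto
  have sqrt_pos: "sqrt \<rho> > 0"
    using assms by simp
  have "0 < r" "r < pi / sqrt \<rho>"
    using a sqrt_pos by (simp_all add: r_def divide_strict_right_mono)
  moreover have "ct \<rho> r = sqrt \<rho> * tan a"
    using assms sqrt_pos by (simp add: ct_def r_def cos_diff sin_diff tan_def)
  then have "\<bar>k\<bar> = \<bar>ct \<rho> r\<bar>"
    using sqrt_pos by (simp add: a_def tan_arctan)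
  ultimately show ?thesis
    unfolding is_circle_def is_circle_radius_def by blast
qed

lemma tanh_artanh_real:
  fixes y :: real
  assumes "- 1 < y" "y < 1"
  shows "tanh (artanh y) = y"
proof -
  have exp_artanh: "exp (- 2 * artanh y) = (1 - y) / (1 + y)"
    using assms by (simp add: artanh_def exp_minus)
  show ?thesis
    unfolding tanh_real_altdef exp_artanh using assms by (simp add: field_simps)
qed

lemma is_hypercycle_hyperbolic:
  fixes \<rho> k :: real
  assumes "\<rho> < 0" and "k \<noteq> 0" and "\<bar>k\<bar> < sqrt (- \<rho>)"
  shows "is_hypercycle \<rho> k"
proof -
  define a where "a = sqrt (- \<rho>)"
  define d where "d = artanh (\<bar>k\<bar> / a) / a"
  have "a > 0"
    using assms(1) by (simp add: a_def)
  have ratio: "0 < \<bar>k\<bar> / a" "\<bar>k\<bar> / a < 1"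
    using assms(2,3) \<open>a > 0\<close> by (auto simp: a_def)
  have tanh_ad: "tanh (a * d) = \<bar>k\<bar> / a"
    using \<open>a > 0\<close> ratio by (simp add: d_def tanh_artanh_real)
  then have "d > 0"
    using ratio \<open>a > 0\<close> by (metis tanh_real_pos_iff zero_less_mult_pos)
  moreover have "\<bar>k\<bar> = a * tanh (a * d)"
    using tanh_ad \<open>a > 0\<close> by simp
  ultimately show ?thesis
    unfolding is_hypercycle_def a_def using assms(1) by blast
qed

lemma is_circle_hyperbolic:
  fixes \<rho> k :: real
  assumes "\<rho> < 0" and "sqrt (- \<rho>) < \<bar>k\<bar>"
  shows "is_circle \<rho> k"
proof -
  define a where "a = sqrt (- \<rho>)"
  define r where "r = artanh (a / \<bar>k\<bar>) / a"
  have "a > 0" "a < \<bar>k\<bar>"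
    using assms by (simp_all add: a_def)
  then have ratio: "0 < a / \<bar>k\<bar>" "a / \<bar>k\<bar> < 1"
    by simp_all
  have tanh_ar: "tanh (a * r) = a / \<bar>k\<bar>"
    using \<open>a > 0\<close> ratio by (simp add: r_def tanh_artanh_real)
  then have "a * r > 0"
    using ratio by (metis tanh_real_pos_iff)
  then have "r > 0"
    using \<open>a > 0\<close> by (simp add: zero_less_mult_iff)
  have "ct \<rho> r = a / tanh (a * r)"
    using assms(1) \<open>a * r > 0\<close> by (simp add: ct_def a_def tanh_def)
  then have "\<bar>k\<bar> = \<bar>ct \<rho> r\<bar>"
    using tanh_ar \<open>a > 0\<close> ratio by simp
  then show ?thesis
    unfolding is_circle_def is_circle_radius_def using \<open>r > 0\<close> assms(1) by auto
qed

lemma EL_const_hyperbolic: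
  fixes \<mu> \<rho> k :: real
  assumes "\<mu> > 0" and "\<rho> < 0" and "EL_const \<mu> \<rho> k"
  shows "k \<noteq> 0 \<and> \<bar>k\<bar> \<noteq> sqrt (- \<rho>)"
proof -
  have eq: "k\<^sup>2 - k / \<mu> + \<rho> = 0"
    using assms(3) by (simp add: EL_const_iff)
  have "k \<noteq> 0"
    using eq assms(2) by auto
  moreover have "k\<^sup>2 \<noteq> - \<rho>"
    using eq assms(1) \<open>k \<noteq> 0\<close> by auto
  then have "\<bar>k\<bar> \<noteq> sqrt (- \<rho>)"
    by (metis real_sqrt_abs real_sqrt_eq_iff)
  ultimately show ?thesis ..
qed

theorem proposition2p4:
  fixes \<mu> \<rho> \<kappa> :: real
  assumes "\<mu> > 0"
    and "EL_const \<mu> \<rho> \<kappa>"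
  shows "(\<rho> = 0 \<longrightarrow> is_geodesic \<kappa> \<or> is_circle_radius 0 \<kappa> \<mu>)
       \<and> (\<rho> > 0 \<longrightarrow>
            0 < 2 * sqrt \<rho> * \<mu> \<and> 2 * sqrt \<rho> * \<mu> \<le> 1
          \<and> (2 * sqrt \<rho> * \<mu> < 1 \<longrightarrow>
               card {k. EL_const \<mu> \<rho> k} = 2 \<and> (\<forall>k. EL_const \<mu> \<rho> k \<longrightarrow> is_circle \<rho> k))
          \<and> (2 * sqrt \<rho> * \<mu> = 1 \<longrightarrow> is_circle \<rho> \<kappa> \<and> \<kappa> = sqrt \<rho>))
       \<and> (\<rho> < 0 \<longrightarrow> is_circle \<rho> \<kappa> \<or> is_hypercycle \<rho> \<kappa>)"
proof (intro conjI impI)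
  assume "\<rho> = 0"
  then show "is_geodesic \<kappa> \<or> is_circle_radius 0 \<kappa> \<mu>"
    using assms EL_const_Euclidean is_circle_radius_Euclidean by (auto simp: is_geodesic_def)
next
  assume "\<rho> > 0"
  have square: "(2 * sqrt \<rho> * \<mu>)\<^sup>2 = 4 * \<rho> * \<mu>\<^sup>2"
    using \<open>\<rho> > 0\<close> by (simp add: power_mult_distrib)
  show "0 < 2 * sqrt \<rho> * \<mu>"
    using \<open>\<rho> > 0\<close> assms(1) by simp
  show "2 * sqrt \<rho> * \<mu> \<le> 1"
    using EL_const_imp_discriminant_nonneg[OF assms] square by (simp add: power2_le_imp_le)
  show "card {k. EL_const \<mu> \<rho> k} = 2" if "2 * sqrt \<rho> * \<mu> < 1"
    using card_EL_const[OF assms(1), of \<rho>] square that \<open>0 < 2 * sqrt \<rho> * \<mu>\<close>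
      power_less_one_iff[of "2 * sqrt \<rho> * \<mu>" 2] by simp
  show "\<forall>k. EL_const \<mu> \<rho> k \<longrightarrow> is_circle \<rho> k" "is_circle \<rho> \<kappa>"
    using is_circle_sphere[OF \<open>\<rho> > 0\<close>] by simp_all
  show "\<kappa> = sqrt \<rho>" if "2 * sqrt \<rho> * \<mu> = 1"
    using EL_const_double_root[OF assms(1) that assms(2)] .
next
  assume "\<rho> < 0"
  then show "is_circle \<rho> \<kappa> \<or> is_hypercycle \<rho> \<kappa>"
    using EL_const_hyperbolic[OF assms(1) \<open>\<rho> < 0\<close> assms(2)]
      is_circle_hyperbolic is_hypercycle_hyperbolic by (meson linorder_neqE_linordered_idom)
qed

end
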